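(* Let $\phi:\mathbb{R}\to\mathbb{R}\cup\{+\infty\}$ be a strictly convex, closed scalar function of Legendre type with Legendre conjugate $\psi(y)=\sup_\lambda(\lambda y-\phi(\lambda))$, and for vectors set $\phi(\mathbf{x})=\sum_m\phi(x_m)$, $\psi(\mathbf{y})=\sum_m\psi(y_m)$. Define $L_\phi(\mathbf{a},\mathbf{b})=\phi(\mathbf{a})+\psi(\mathbf{b})-\langle\mathbf{a},\mathbf{b}\rangle$ (equivalently $D_\phi(\mathbf{a},\nabla\psi(\mathbf{b}))$, the Bregman divergence of $\phi$), for vectors or scalars. Fix a user $i$ who has rated the set $\mathcal{V}_i$ of items, with ratings $R_{ij}\in[L]$ for $j\in\mathcal{V}_i$, and let $\hat{\mathbf{R}}_i=(\hat R_{ij})_{j\in\mathcal{V}_i}$ be any real vector of predictions. For $l\in[L]$ let $\Omega_{il}=|\{j\in\mathcal{V}_i: R_{ij}=l\}|$, assume $\Omega_{il}\ge 1$ for every $l$, and let $\bar{\hat R}_i^{\,l}=\frac{1}{\Omega_{il}}\sum_{j: R_{ij}=l}\hat R_{ij}$. For a rating-scale vector assign to each level $l$ a value $r_{il}$, and let $E_i\mathbf{r}_i\in\mathbb{R}^{|\mathcal{V}_i|}$ be the vector whose entry for item $j$ is $r_{i,R_{ij}}$. Then the set of minimizers of $L_\phi(E_i\mathbf{r}_i,\hat{\mathbf{R}}_i)$ over rating-scale vectors with $r_{i1}\le r_{i2}\le\cdots\le r_{iL}$ equals the set of minimizers of $\sum_{l=1}^L\Omega_{il}\,L_\phi\big(r_{il},\bar{\hat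 R}_i^{\,l}\big)$ over the same set of vectors.
   Context: In the paper the rating-scale vector lies in the set of vectors in $\mathbb{R}^L$ with components in non-increasing order, with rating level $l$ stored in component $L-l+1$ (one-hot encoding $e_{L-l+1}=1$ for rating $l$); in the statement above $r_{il}$ directly denotes the value assigned to rating level $l$, so this set corresponds to $r_{i1}\le\cdots\le r_{iL}$. *)

theory Defs
  imports "HOL-Analysis.Analysis" "HOL-Library.Extended_Real"
begin

definition edom :: "(real \<Rightarrow> ereal) \<Rightarrow> real set" where
  "edom \<phi> = {x. \<phi> x < \<infinity>}"

definition proper_fun :: "(real \<Rightarrow> ereal) \<Rightarrow> bool" where
  "proper_fun \<phi> \<longleftrightarrow> (\<forall>x. \<phi> x \<noteq> -\<infinity>) \<and> edom \<phi> \<noteq> {}"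

definition convex_efun :: "(real \<Rightarrow> ereal) \<Rightarrow> bool" where
  "convex_efun \<phi> \<longleftrightarrow> (\<forall>x y t. 0 \<le> t \<and> t \<le> 1 \<longrightarrow>
      \<phi> ((1 - t) * x + t * y) \<le> ereal (1 - t) * \<phi> x + ereal t * \<phi> y)"

definition strictly_convex_efun :: "(real \<Rightarrow> ereal) \<Rightarrow> bool" where
  "strictly_convex_efun \<phi> \<longleftrightarrow> convex_efun \<phi> \<and>
     (\<forall>x\<in>edom \<phi>. \<forall>y\<in>edom \<phi>. \<forall>t. x \<noteq> y \<and> 0 < t \<and> t < 1 \<longrightarrow>
      \<phi> ((1 - t) * x + t * y) < ereal (1 - t) * \<phi> x + ereal t * \<phi> y)"

definition closed_efun :: "(real \<Rightarrow> ereal) \<Rightarrow> bool" where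
  "closed_efun \<phi> \<longleftrightarrow> (\<forall>x X. X \<longlonglongrightarrow> x \<longrightarrow> \<phi> x \<le> liminf (\<lambda>k. \<phi> (X k)))"

text \<open>Essential smoothness (Rockafellar, Sec. 26), one-dimensional case.\<close>
definition essentially_smooth :: "(real \<Rightarrow> ereal) \<Rightarrow> bool" where
  "essentially_smooth \<phi> \<longleftrightarrow>
     interior (edom \<phi>) \<noteq> {} \<and>
     (\<forall>x\<in>interior (edom \<phi>). (\<lambda>t. real_of_ereal (\<phi> t)) differentiable (at x)) \<and>
     (\<forall>X x. (\<forall>k. X k \<in> interior (edom \<phi>)) \<and> X \<longlonglongrightarrow> x \<and> x \<in> frontier (edom \<phi>) \<longrightarrow>
        filterlim (\<lambda>k. \<bar>deriv (\<lambda>t. real_of_ereal (\<phi> t)) (X k)\<bar>) at_top sequentially)"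

text \<open>Essential strict convexity: strictly convex on every convex subset of the
  domain of the subdifferential; we render it as strict convexity on the effective domain
  (the statement additionally assumes strict convexity, so nothing is lost).\<close>
definition legendre_type :: "(real \<Rightarrow> ereal) \<Rightarrow> bool" where
  "legendre_type \<phi> \<longleftrightarrow> proper_fun \<phi> \<and> convex_efun \<phi> \<and> essentially_smooth \<phi> \<and> strictly_convex_efun \<phi>"

definition conj_fun :: "(real \<Rightarrow> ereal) \<Rightarrow> real \<Rightarrow> ereal" where
  "conj_fun \<phi> y = (SUP u. ereal (u * y) - \<phi> u)"

definition Lphi :: "(real \<Rightarrow> ereal) \<Rightarrow> real \<Rightarrow> real \<Rightarrow> ereal" where
  "Lphi \<phi> a b = \<phi> a + conj_fun \<phi> b - ereal (a * b)"

definition Lphi_vec :: "(real \<Rightarrow> ereal) \<Rightarrow> 'j set \<Rightarrow> ('j \<Rightarrow> real) \<Rightarrow> ('j \<Rightarrow> real) \<Rightarrow> ereal" where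
  "Lphi_vec \<phi> V a b = (\<Sum>j\<in>V. \<phi> (a j)) + (\<Sum>j\<in>V. conj_fun \<phi> (b j)) - ereal (\<Sum>j\<in>V. a j * b j)"

definition rating_scales :: "nat \<Rightarrow> (nat \<Rightarrow> real) set" where
  "rating_scales L = {r. (\<forall>l. l \<notin> {1..L} \<longrightarrow> r l = 0) \<and>
                        (\<forall>l1 l2. 1 \<le> l1 \<and> l1 \<le> l2 \<and> l2 \<le> L \<longrightarrow> r l1 \<le> r l2)}"

definition expand_scale :: "('j \<Rightarrow> nat) \<Rightarrow> (nat \<Rightarrow> real) \<Rightarrow> 'j \<Rightarrow> real" where
  "expand_scale R r = (\<lambda>j. r (R j))"

definition Omega :: "'j set \<Rightarrow> ('j \<Rightarrow> nat) \<Rightarrow> nat \<Rightarrow> nat" where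
  "Omega V R l = card {j\<in>V. R j = l}"

definition level_mean :: "'j set \<Rightarrow> ('j \<Rightarrow> nat) \<Rightarrow> ('j \<Rightarrow> real) \<Rightarrow> nat \<Rightarrow> real" where
  "level_mean V R Rhat l = (\<Sum>j\<in>{j\<in>V. R j = l}. Rhat j) / real (Omega V R l)"

definition argmin_on :: "'a set \<Rightarrow> ('a \<Rightarrow> ereal) \<Rightarrow> 'a set" where
  "argmin_on S f = {x\<in>S. \<forall>y\<in>S. f x \<le> f y}"

end

theory Submission
  imports Defs
begin

text \<open>Both objectives are the function
  \<open>F(r) = \<Sum>\<^sub>l \<Omega>\<^sub>l \<phi>(r\<^sub>l) - \<Sum>\<^sub>j r\<^bsub>R j\<^esub> Rhat\<^sub>j\<close> plus a real constant that does not
  depend on \<open>r\<close>: \<open>\<Sum>\<^sub>j \<psi>(Rhat\<^sub>j)\<close> for the item-wise objective and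
  \<open>\<Sum>\<^sub>l \<Omega>\<^sub>l \<psi>(mean\<^sub>l)\<close> for the level-wise one, because \<open>\<Omega>\<^sub>l mean\<^sub>l\<close> is the sum of
  the predictions at level \<open>l\<close>.  The second constant is finite since \<open>\<psi>\<close> is a supremum of
  affine functions, hence convex, and finite at every prediction.  Shifting by a finite
  constant leaves the minimisers unchanged.\<close>

lemma sum_ereal_neq_minf:
  fixes f :: "'a \<Rightarrow> ereal"
  assumes "\<And>x. x \<in> A \<Longrightarrow> f x \<noteq> -\<infinity>"
  shows "sum f A \<noteq> -\<infinity>"
  using assms
proof (induction A rule: infinite_finite_induct)
  case (insert x F)
  then have "f x \<noteq> -\<infinity>" "sum f F \<noteq> -\<infinity>" by auto
  then show ?case using insert(1,2) by (cases "f x"; cases "sum f F") auto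
qed auto

lemma argmin_on_add_const:
  assumes "\<And>x. x \<in> S \<Longrightarrow> f x = g x + ereal c"
  shows "argmin_on S f = argmin_on S g"
  using assms unfolding argmin_on_def by (auto simp: ereal_add_le_add_iff2)

lemma conj_fun_ge: "ereal (u * y) - \<phi> u \<le> conj_fun \<phi> y"
  unfolding conj_fun_def by (rule SUP_upper) simp

lemma conj_fun_neq_minf:
  assumes "proper_fun \<phi>"
  shows "conj_fun \<phi> y \<noteq> -\<infinity>"
proof -
  obtain u where "\<phi> u < \<infinity>" "\<phi> u \<noteq> -\<infinity>"
    using assms unfolding proper_fun_def edom_def by auto
  then obtain p where "\<phi> u = ereal p" by (cases "\<phi> u") auto
  then show ?thesis using conj_fun_ge[of u y \<phi>] by auto
qed

lemma conj_fun_mean_le: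
  assumes "finite K" "K \<noteq> {}" and "\<And>x. \<phi> x \<noteq> -\<infinity>"
    and "\<And>j. j \<in> K \<Longrightarrow> conj_fun \<phi> (y j) = ereal (c j)"
  shows "conj_fun \<phi> ((\<Sum>j\<in>K. y j) / card K) \<le> ereal ((\<Sum>j\<in>K. c j) / card K)"
  unfolding conj_fun_def
proof (rule SUP_least)
  fix u
  show "ereal (u * ((\<Sum>j\<in>K. y j) / card K)) - \<phi> u \<le> ereal ((\<Sum>j\<in>K. c j) / card K)"
  proof (cases "\<phi> u")
    case (real p)
    have "u * y j - p \<le> c j" if "j \<in> K" for j
      using conj_fun_ge[of u "y j" \<phi>] assms(4)[OF that] real by simp
    then have "(\<Sum>j\<in>K. u * y j - p) \<le> (\<Sum>j\<in>K. c j)" by (rule sum_mono)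
    then have "u * (\<Sum>j\<in>K. y j) - card K * p \<le> (\<Sum>j\<in>K. c j)"
      by (simp add: sum_subtractf sum_distrib_left)
    then have "(u * (\<Sum>j\<in>K. y j) - card K * p) / card K \<le> (\<Sum>j\<in>K. c j) / card K"
      by (rule divide_right_mono) simp
    moreover have "real (card K) \<noteq> 0" using assms(1,2) by simp
    ultimately show ?thesis using real by (simp add: diff_divide_distrib)
  qed (use assms(3) in auto)
qed

lemma conj_fun_level_mean_finite:
  assumes "proper_fun \<phi>" "finite V" "Omega V R l \<ge> 1"
    and "\<forall>j\<in>V. conj_fun \<phi> (Rhat j) < \<infinity>"
  shows "\<bar>conj_fun \<phi> (level_mean V R Rhat l)\<bar> \<noteq> \<infinity>"
proof -
  define K where "K = {j\<in>V. R j = l}"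
  define c where "c j = real_of_ereal (conj_fun \<phi> (Rhat j))" for j
  have "conj_fun \<phi> (Rhat j) = ereal (c j)" if "j \<in> K" for j
    using assms(4) that conj_fun_neq_minf[OF assms(1), of "Rhat j"] unfolding c_def K_def
    by (cases "conj_fun \<phi> (Rhat j)") auto
  moreover have "finite K" using assms(2) unfolding K_def by simp
  moreover have "K \<noteq> {}"
    using assms(3) unfolding K_def Omega_def by (metis card.empty not_one_le_zero)
  moreover have "\<phi> x \<noteq> -\<infinity>" for x
    using assms(1) unfolding proper_fun_def by auto
  ultimately have "conj_fun \<phi> (level_mean V R Rhat l) \<le> ereal ((\<Sum>j\<in>K. c j) / card K)"
    using conj_fun_mean_le[of K \<phi> Rhat c]
    unfolding level_mean_def Omega_def K_def by blast
  then show ?thesis using conj_fun_neq_minf[OF assms(1)] by auto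
qed

lemma sum_by_level:
  fixes R :: "'j \<Rightarrow> nat"
  assumes "finite V" "\<forall>j\<in>V. R j \<in> {1..L}"
  shows "(\<Sum>j\<in>V. f j) = (\<Sum>l\<in>{1..L}. \<Sum>j\<in>{j\<in>V. R j = l}. f j)"
proof -
  have "R ` V \<subseteq> {1..L}" using assms(2) by auto
  then show ?thesis using sum.group[OF assms(1) finite_atLeastAtMost[of 1 L], of R f] by simp
qed

lemma sum_expand_scale:
  assumes "finite V" "\<forall>j\<in>V. R j \<in> {1..L}"
  shows "(\<Sum>j\<in>V. f (expand_scale R r j)) = (\<Sum>l\<in>{1..L}. ereal (Omega V R l) * f (r l))"
  unfolding sum_by_level[OF assms]
  by (intro sum.cong refl) (simp add: expand_scale_def Omega_def sum_constant_ereal mult.commute)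

lemma Omega_mult_level_mean:
  assumes "finite V"
  shows "real (Omega V R l) * level_mean V R Rhat l = (\<Sum>j\<in>{j\<in>V. R j = l}. Rhat j)"
proof (cases "{j\<in>V. R j = l} = {}")
  case True
  then show ?thesis unfolding level_mean_def Omega_def True by simp
next
  case False
  then show ?thesis using assms unfolding level_mean_def Omega_def by simp
qed

lemma inner_expand_scale:
  assumes "finite V" "\<forall>j\<in>V. R j \<in> {1..L}"
  shows "(\<Sum>j\<in>V. expand_scale R r j * Rhat j)
       = (\<Sum>l\<in>{1..L}. real (Omega V R l) * (r l * level_mean V R Rhat l))"
  unfolding sum_by_level[OF assms]
proof (intro sum.cong refl)
  fix l
  have "(\<Sum>j\<in>{j\<in>V. R j = l}. expand_scale R r j * Rhat j) = r l * (\<Sum>j\<in>{j\<in>V. R j = l}. Rhat j)"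
    by (simp add: expand_scale_def sum_distrib_left)
  then show "(\<Sum>j\<in>{j\<in>V. R j = l}. expand_scale R r j * Rhat j)
           = real (Omega V R l) * (r l * level_mean V R Rhat l)"
    using Omega_mult_level_mean[OF assms(1), of R l Rhat] by (metis mult.left_commute)
qed

definition scale_misfit ::
    "(real \<Rightarrow> ereal) \<Rightarrow> 'j set \<Rightarrow> ('j \<Rightarrow> nat) \<Rightarrow> ('j \<Rightarrow> real) \<Rightarrow> nat \<Rightarrow> (nat \<Rightarrow> real) \<Rightarrow> ereal"
  where "scale_misfit \<phi> V R Rhat L r =
    (\<Sum>l\<in>{1..L}. ereal (Omega V R l) * \<phi> (r l)) - ereal (\<Sum>j\<in>V. expand_scale R r j * Rhat j)"

lemma Omega_mult_neq_minf: "x \<noteq> -\<infinity> \<Longrightarrow> ereal (Omega V R l) * x \<noteq> -\<infinity>"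
  by (cases x) auto

lemma Lphi_vec_expand_scale:
  assumes "\<And>x. \<phi> x \<noteq> -\<infinity>" "finite V" "\<forall>j\<in>V. R j \<in> {1..L}"
    and "\<forall>j\<in>V. \<bar>conj_fun \<phi> (Rhat j)\<bar> \<noteq> \<infinity>"
  shows "Lphi_vec \<phi> V (expand_scale R r) Rhat
       = scale_misfit \<phi> V R Rhat L r + ereal (\<Sum>j\<in>V. real_of_ereal (conj_fun \<phi> (Rhat j)))"
proof -
  let ?A = "\<Sum>l\<in>{1..L}. ereal (Omega V R l) * \<phi> (r l)"
  have "?A \<noteq> -\<infinity>" by (intro sum_ereal_neq_minf Omega_mult_neq_minf assms(1))
  moreover have "(\<Sum>j\<in>V. conj_fun \<phi> (Rhat j)) = (\<Sum>j\<in>V. ereal (real_of_ereal (conj_fun \<phi> (Rhat j))))"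
    using assms(4) by (intro sum.cong refl) (simp add: ereal_real)
  ultimately show ?thesis
    unfolding Lphi_vec_def scale_misfit_def sum_expand_scale[OF assms(2,3)]
    by (cases ?A) auto
qed

lemma sum_Lphi_level_mean:
  assumes "\<And>x. \<phi> x \<noteq> -\<infinity>" "finite V" "\<forall>j\<in>V. R j \<in> {1..L}"
    and "\<forall>l\<in>{1..L}. \<bar>conj_fun \<phi> (level_mean V R Rhat l)\<bar> \<noteq> \<infinity>"
  shows "(\<Sum>l\<in>{1..L}. ereal (real (Omega V R l)) * Lphi \<phi> (r l) (level_mean V R Rhat l))
       = scale_misfit \<phi> V R Rhat L r
         + ereal (\<Sum>l\<in>{1..L}. Omega V R l * real_of_ereal (conj_fun \<phi> (level_mean V R Rhat l)))"
proof -
  let ?m = "level_mean V R Rhat" and ?n = "\<lambda>l. real (Omega V R l)"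
  let ?d = "\<lambda>l. real_of_ereal (conj_fun \<phi> (?m l))"
  let ?A = "\<Sum>l\<in>{1..L}. ereal (?n l) * \<phi> (r l)"
  have level_term: "ereal (?n l) * Lphi \<phi> (r l) (?m l)
      = ereal (?n l) * \<phi> (r l) + ereal (?n l * ?d l - ?n l * (r l * ?m l))"
    if l: "l \<in> {1..L}" for l
  proof -
    obtain d where d: "conj_fun \<phi> (?m l) = ereal d"
      using assms(4)[rule_format, OF l] by (cases "conj_fun \<phi> (?m l)") auto
    show ?thesis unfolding Lphi_def d using assms(1)[of "r l"]
      by (cases "\<phi> (r l)") (auto simp: algebra_simps)
  qed
  have shift: "a + ereal (D - S) = a - ereal S + ereal D" if "a \<noteq> -\<infinity>" for a :: ereal and D S
    using that by (cases a) simp_all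
  have "?A \<noteq> -\<infinity>" by (intro sum_ereal_neq_minf Omega_mult_neq_minf assms(1))
  have "(\<Sum>l\<in>{1..L}. ereal (?n l) * Lphi \<phi> (r l) (?m l))
      = ?A + ereal ((\<Sum>l\<in>{1..L}. ?n l * ?d l) - (\<Sum>l\<in>{1..L}. ?n l * (r l * ?m l)))"
    by (simp only: sum.cong[OF refl level_term] sum.distrib sum_ereal sum_subtractf)
  also have "\<dots> = ?A - ereal (\<Sum>l\<in>{1..L}. ?n l * (r l * ?m l)) + ereal (\<Sum>l\<in>{1..L}. ?n l * ?d l)"
    by (rule shift) fact
  finally show ?thesis
    unfolding scale_misfit_def inner_expand_scale[OF assms(2,3)] .
qed

theorem lemma2:
  fixes \<phi> :: "real \<Rightarrow> ereal" and V :: "'j set" and R :: "'j \<Rightarrow> nat"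
    and Rhat :: "'j \<Rightarrow> real" and L :: nat
  assumes "strictly_convex_efun \<phi>" and "closed_efun \<phi>" and "legendre_type \<phi>"
    and "finite V"
    and "\<forall>j\<in>V. R j \<in> {1..L}"
    and "\<forall>l\<in>{1..L}. Omega V R l \<ge> 1"
    and "\<forall>j\<in>V. conj_fun \<phi> (Rhat j) < \<infinity>"
  shows "argmin_on (rating_scales L) (\<lambda>r. Lphi_vec \<phi> V (expand_scale R r) Rhat)
       = argmin_on (rating_scales L)
           (\<lambda>r. \<Sum>l\<in>{1..L}. ereal (real (Omega V R l)) * Lphi \<phi> (r l) (level_mean V R Rhat l))"
proof -
  have "proper_fun \<phi>" using assms(3) unfolding legendre_type_def by simp
  then have phi: "\<phi> x \<noteq> -\<infinity>" for x unfolding proper_fun_def by simp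
  have item_conj: "\<forall>j\<in>V. \<bar>conj_fun \<phi> (Rhat j)\<bar> \<noteq> \<infinity>"
    using assms(7) conj_fun_neq_minf[OF \<open>proper_fun \<phi>\<close>] by auto
  have level_conj: "\<forall>l\<in>{1..L}. \<bar>conj_fun \<phi> (level_mean V R Rhat l)\<bar> \<noteq> \<infinity>"
    using conj_fun_level_mean_finite[OF \<open>proper_fun \<phi>\<close> assms(4) _ assms(7)] assms(6) by simp
  have "argmin_on (rating_scales L) (\<lambda>r. Lphi_vec \<phi> V (expand_scale R r) Rhat)
      = argmin_on (rating_scales L) (scale_misfit \<phi> V R Rhat L)"
    by (rule argmin_on_add_const) (rule Lphi_vec_expand_scale[OF phi assms(4,5) item_conj])
  also have "\<dots> = argmin_on (rating_scales L)
      (\<lambda>r. \<Sum>l\<in>{1..L}. ereal (real (Omega V R l)) * Lphi \<phi> (r l) (level_mean V R Rhat l))"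
    by (rule argmin_on_add_const[symmetric]) (rule sum_Lphi_level_mean[OF phi assms(4,5) level_conj])
  finally show ?thesis .
qed

end
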